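(* Let $T=(\mathcal V,E,r)$ be a tree whose vertices are distinct points of a metric space $(X,d)$, and give each edge $e=(v,v')$ length $L_e=d(v,v')$. Sort the edges as $e_1,\dots,e_{|\mathcal V|-1}$ in nondecreasing order of length, and assign ranks: $e_1$ has rank 1, and for $t\ge2$, $e_t$ has the rank of $e_{t-1}$ if $L_{e_t}\le2\sum_{s=1}^{t-1}L_{e_s}$, and the rank of $e_{t-1}$ plus 1 otherwise. Then for any two edges $e,e'$ of the same rank, $L_e/L_{e'}\le3^{|\mathcal V|-1}$. *)

theory Defs
  imports Complex_Main
begin

definition is_rooted_tree :: "'a set \<Rightarrow> ('a \<times> 'a) set \<Rightarrow> 'a \<Rightarrow> bool" where
  "is_rooted_tree V E r \<longleftrightarrow>
     finite V \<and> r \<in> V \<and> E \<subseteq> V \<times> V \<and>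
     (\<forall>u. (u, r) \<notin> E) \<and>
     (\<forall>v\<in>V - {r}. \<exists>!u. (u, v) \<in> E) \<and>
     (\<forall>v\<in>V. (r, v) \<in> E\<^sup>*)"

definition edge_len :: "('a::metric_space \<times> 'a) \<Rightarrow> real" where
  "edge_len e = dist (fst e) (snd e)"

text \<open>Ranks along a list of lengths (0-indexed position t corresponds to edge e_(t+1)):
  the first edge has rank 1; edge t+1 keeps the rank of edge t if its length is at most
  twice the sum of all previous lengths, otherwise the rank increases by 1.\<close>
fun rank :: "real list \<Rightarrow> nat \<Rightarrow> nat" where
  "rank Ls 0 = 1"
| "rank Ls (Suc t) =
     (if Ls ! Suc t \<le> 2 * sum_list (take (Suc t) Ls) then rank Ls t else rank Ls t + 1)"

end

theory Submission
  imports Defs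
begin

text \<open>Write \<open>S t\<close> for the sum of the first \<open>t + 1\<close> lengths. While the rank stays constant,
  every new length is at most \<open>2 S t\<close>, so the prefix sums grow by a factor of at most 3 per
  step. For positions \<open>j \<le> i\<close> of equal rank, \<open>L\<^sub>i\<close> is therefore at most
  \<open>3\<^sup>i\<^sup>-\<^sup>j S j\<close>, and since the lengths are sorted, \<open>S j \<le> (j + 1) L\<^sub>j \<le> 3\<^sup>j L\<^sub>j\<close>.
  Finally a tree has fewer edges than vertices.\<close>

lemma rank_mono: "a \<le> b \<Longrightarrow> rank Ls a \<le> rank Ls b"
  by (induction b) (auto simp: le_Suc_eq)

lemma rank_step_bounded_within_block:
  assumes "rank Ls i = rank Ls j" "j \<le> t" "t < i"
  shows "Ls ! Suc t \<le> 2 * sum_list (take (Suc t) Ls)"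
proof -
  have "rank Ls j \<le> rank Ls t"
    using assms(2) by (rule rank_mono)
  moreover have "rank Ls t \<le> rank Ls (Suc t)"
    by (rule rank_mono) simp
  moreover have "rank Ls (Suc t) \<le> rank Ls i"
    using assms(3) by (intro rank_mono) simp
  ultimately have "rank Ls (Suc t) = rank Ls t"
    using assms(1) by linarith
  then show ?thesis
    by (auto split: if_splits)
qed

lemma sum_list_take_Suc:
  "t < length Ls \<Longrightarrow> sum_list (take (Suc t) Ls) = sum_list (take t Ls) + Ls ! t"
  by (simp add: take_Suc_conv_app_nth)

lemma prefix_sum_growth_within_block:
  fixes Ls :: "real list"
  assumes same_rank: "rank Ls i = rank Ls j" and "j \<le> i" "i < length Ls"
  shows "sum_list (take (Suc i) Ls) \<le> 3 ^ (i - j) * sum_list (take (Suc j) Ls)"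
proof -
  have "t \<le> i \<longrightarrow> sum_list (take (Suc t) Ls) \<le> 3 ^ (t - j) * sum_list (take (Suc j) Ls)"
    if "j \<le> t" for t
    using that
  proof (induction t rule: dec_induct)
    case base
    show ?case by simp
  next
    case (step t)
    show ?case
    proof
      assume "Suc t \<le> i"
      have "sum_list (take (Suc (Suc t)) Ls) = sum_list (take (Suc t) Ls) + Ls ! Suc t"
        using \<open>Suc t \<le> i\<close> \<open>i < length Ls\<close> by (simp add: sum_list_take_Suc)
      also have "\<dots> \<le> 3 * sum_list (take (Suc t) Ls)"
        using rank_step_bounded_within_block[OF same_rank] step.hyps \<open>Suc t \<le> i\<close> by simp
      also have "\<dots> \<le> 3 * (3 ^ (t - j) * sum_list (take (Suc j) Ls))"
        using step.IH \<open>Suc t \<le> i\<close> by simp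
      also have "\<dots> = 3 ^ (Suc t - j) * sum_list (take (Suc j) Ls)"
        using step.hyps by (simp add: Suc_diff_le)
      finally show "sum_list (take (Suc (Suc t)) Ls) \<le> 3 ^ (Suc t - j) * sum_list (take (Suc j) Ls)" .
    qed
  qed
  then show ?thesis
    using \<open>j \<le> i\<close> by blast
qed

lemma sorted_prefix_sum_le:
  fixes Ls :: "real list"
  assumes "sorted Ls" "j < length Ls"
  shows "sum_list (take (Suc j) Ls) \<le> real (Suc j) * Ls ! j"
proof -
  have "sum_list (take (Suc j) Ls) = (\<Sum>k<Suc j. Ls ! k)"
    using assms(2) by (simp add: sum_list_sum_nth lessThan_atLeast0 min_absorb2)
  also have "\<dots> \<le> (\<Sum>k<Suc j. Ls ! j)"
    using assms by (intro sum_mono) (simp add: sorted_nth_mono)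
  finally show ?thesis
    by simp
qed

lemma nth_le_prefix_sum:
  fixes Ls :: "real list"
  assumes "\<forall>x\<in>set Ls. 0 \<le> x" "i < length Ls"
  shows "Ls ! i \<le> sum_list (take (Suc i) Ls)"
proof -
  have "0 \<le> sum_list (take i Ls)"
    using assms(1) by (intro sum_list_nonneg) (meson in_set_takeD)
  then show ?thesis
    using assms(2) by (simp add: sum_list_take_Suc)
qed

lemma Suc_le_power3: "Suc n \<le> (3::nat) ^ n"
  by (induction n) auto

lemma nth_le_within_block:
  fixes Ls :: "real list"
  assumes "sorted Ls" "\<forall>x\<in>set Ls. 0 \<le> x" "j \<le> i" "i < length Ls"
    and "rank Ls i = rank Ls j"
  shows "Ls ! i \<le> 3 ^ i * Ls ! j"
proof -
  have "real (Suc j) \<le> 3 ^ j"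
    using Suc_le_power3[of j] by (metis of_nat_le_iff of_nat_numeral of_nat_power)
  moreover have "0 \<le> Ls ! j"
    using assms by auto
  ultimately have "real (Suc j) * Ls ! j \<le> 3 ^ j * Ls ! j"
    by (rule mult_right_mono)
  then have Sj: "sum_list (take (Suc j) Ls) \<le> 3 ^ j * Ls ! j"
    using sorted_prefix_sum_le[of Ls j] assms by linarith
  have "Ls ! i \<le> sum_list (take (Suc i) Ls)"
    using nth_le_prefix_sum assms by blast
  also have "\<dots> \<le> 3 ^ (i - j) * sum_list (take (Suc j) Ls)"
    using prefix_sum_growth_within_block assms by blast
  also have "\<dots> \<le> 3 ^ (i - j) * (3 ^ j * Ls ! j)"
    using Sj by (intro mult_left_mono) auto
  also have "\<dots> = 3 ^ i * Ls ! j"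
    using \<open>j \<le> i\<close> by (simp flip: power_add)
  finally show ?thesis .
qed

lemma same_rank_nth_le:
  fixes Ls :: "real list"
  assumes "sorted Ls" "\<forall>x\<in>set Ls. 0 \<le> x" "i < length Ls" "j < length Ls"
    and "rank Ls i = rank Ls j"
  shows "Ls ! i \<le> 3 ^ (length Ls - 1) * Ls ! j"
proof (cases "i \<le> j")
  case True
  have "0 \<le> Ls ! j"
    using assms by auto
  then have "Ls ! j \<le> 3 ^ (length Ls - 1) * Ls ! j"
    by (simp add: mult_le_cancel_right1)
  then show ?thesis
    using sorted_nth_mono[OF assms(1) True assms(4)] by linarith
next
  case False
  have "Ls ! i \<le> 3 ^ i * Ls ! j"
    using nth_le_within_block[of Ls j i] False assms by simp
  also have "\<dots> \<le> 3 ^ (length Ls - 1) * Ls ! j"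
    using assms by (intro mult_right_mono power_increasing) auto
  finally show ?thesis .
qed

lemma rooted_tree_card_edges:
  assumes "is_rooted_tree V E r"
  shows "card E \<le> card V - 1"
proof -
  have tree: "finite V" "r \<in> V" "E \<subseteq> V \<times> V" "\<forall>u. (u, r) \<notin> E"
    "\<forall>v\<in>V - {r}. \<exists>!u. (u, v) \<in> E"
    using assms unfolding is_rooted_tree_def by auto
  have "inj_on snd E"
  proof (rule inj_onI)
    fix x y assume "x \<in> E" "y \<in> E" "snd x = snd y"
    moreover have "snd x \<in> V - {r}"
      using \<open>x \<in> E\<close> tree(3,4) by (cases x) auto
    ultimately show "x = y"
      using tree(5) by (cases x, cases y) auto
  qed
  then have "card E = card (snd ` E)"
    by (simp add: card_image)
  also have "\<dots> \<le> card (V - {r})"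
    using tree by (intro card_mono) force+
  also have "\<dots> = card V - 1"
    using tree by simp
  finally show ?thesis .
qed

theorem claim3:
  fixes V :: "'a::metric_space set" and E :: "('a \<times> 'a) set" and r :: 'a
    and es :: "('a \<times> 'a) list"
  assumes tree: "is_rooted_tree V E r"
    and enum: "distinct es" "set es = E"
    and sorted: "sorted (map edge_len es)"
    and i: "i < length es" and j: "j < length es"
    and same_rank: "rank (map edge_len es) i = rank (map edge_len es) j"
  shows "edge_len (es ! i) / edge_len (es ! j) \<le> 3 ^ (card V - 1)"
proof -
  have nonneg: "\<forall>x\<in>set (map edge_len es). 0 \<le> x"
    by (auto simp: edge_len_def)
  have "length es \<le> card V - 1"
    using rooted_tree_card_edges[OF tree] enum distinct_card by metis
  then have "(3::real) ^ (length es - 1) \<le> 3 ^ (card V - 1)"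
    by (intro power_increasing) auto
  moreover have "edge_len (es ! i) \<le> 3 ^ (length es - 1) * edge_len (es ! j)"
    using same_rank_nth_le[OF sorted nonneg _ _ same_rank] i j by simp
  moreover have len_j: "0 \<le> edge_len (es ! j)"
    by (simp add: edge_len_def)
  ultimately have "edge_len (es ! i) \<le> 3 ^ (card V - 1) * edge_len (es ! j)"
    by (meson mult_right_mono order_trans)
  then show ?thesis
    using len_j by (cases "edge_len (es ! j) = 0") (auto simp: divide_le_eq)
qed

end
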